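(* Let $0\le d<r\le\min\{m,n\}$ and $\mathcal{R}\in\mathcal{Z}_{n,m,d}$. Then \[\mathfrak{m}(\mathcal{R})\equiv\frac{1}{r-d}\sum_{\mathcal{R}'}\mathfrak{m}(\mathcal{R}')\pmod{\mathbf{I}(\mathcal{Z}_{n,m,r})},\] where the sum runs over all rook placements $\mathcal{R}'\supseteq\mathcal{R}$ with $|\mathcal{R}'|=d+1$.
   Context: Fix positive integers $n,m$. $\mathbb{C}[\mathbf{x}_{n\times m}]$ is the polynomial ring in variables $x_{i,j}$ ($1\le i\le n,1\le j\le m$). A rook placement on the $n\times m$ board is a subset $\mathcal{R}\subseteq[n]\times[m]$ with at most one element in each row and column, identified with its $0/1$ matrix in $\mathrm{Mat}_{n\times m}(\mathbb{C})$; $\mathcal{Z}_{n,m,d}$ is the set of rook placements with exactly $d$ elements; $\mathfrak{m}(\mathcal{R}):=\prod_{(i,j)\in\mathcal{R}}x_{i,j}$. $\mathbf{I}(\mathcal{Z})$ is the ideal of polynomials vanishing on the finite set $\mathcal{Z}$. *)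

theory Defs
  imports Complex_Main
begin

(* A point of Mat_{n x m}(C) is represented as a function (i,j) |-> entry;
   polynomials in C[x_{i,j}] are represented by the polynomial functions they
   induce on such points (C is infinite, so this loses nothing). *)
type_synonym point = "nat \<times> nat \<Rightarrow> complex"

definition rook_placement :: "nat \<Rightarrow> nat \<Rightarrow> (nat \<times> nat) set \<Rightarrow> bool" where
  "rook_placement n m R \<longleftrightarrow>
     R \<subseteq> {1..n} \<times> {1..m} \<and>
     (\<forall>i j i' j'. (i, j) \<in> R \<longrightarrow> (i', j') \<in> R \<longrightarrow> (i = i' \<longleftrightarrow> j = j'))"

definition Z :: "nat \<Rightarrow> nat \<Rightarrow> nat \<Rightarrow> (nat \<times> nat) set set" where
  "Z n m d = {R. rook_placement n m R \<and> card R = d}"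

definition rook_matrix :: "(nat \<times> nat) set \<Rightarrow> point" where
  "rook_matrix R = (\<lambda>p. if p \<in> R then 1 else 0)"

definition rook_monomial :: "(nat \<times> nat) set \<Rightarrow> point \<Rightarrow> complex" where
  "rook_monomial R = (\<lambda>X. \<Prod>p\<in>R. X p)"

definition vanishing_ideal :: "point set \<Rightarrow> (point \<Rightarrow> complex) set" where
  "vanishing_ideal S = {f. \<forall>x\<in>S. f x = 0}"

end

theory Submission
  imports Defs
begin

text \<open>Evaluated at the 0/1 matrix of a rook placement S, the monomial of R is the indicator of
  R \<subseteq> S. Hence at a point of Z n m r both sides vanish when R \<nsubseteq> S, and otherwise the sum
  counts the one-point extensions of R inside S, of which there are exactly |S - R| = r - d.\<close>

lemma rook_placement_subset:
  "rook_placement n m S \<Longrightarrow> A \<subseteq> S \<Longrightarrow> rook_placement n m A"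
  unfolding rook_placement_def by blast

lemma rook_placement_finite: "rook_placement n m S \<Longrightarrow> finite S"
  unfolding rook_placement_def by (meson finite_SigmaI finite_atLeastAtMost finite_subset)

lemma finite_rook_placements: "finite {R. rook_placement n m R \<and> P R}"
proof (rule finite_subset)
  show "{R. rook_placement n m R \<and> P R} \<subseteq> Pow ({1..n} \<times> {1..m})"
    by (auto simp: rook_placement_def)
qed simp

lemma rook_monomial_rook_matrix:
  "finite A \<Longrightarrow> rook_monomial A (rook_matrix S) = (if A \<subseteq> S then 1 else 0)"
  unfolding rook_monomial_def rook_matrix_def
  by (induction A rule: finite_induct) auto

lemma one_point_extensions_within:
  assumes "finite S" and "R \<subseteq> S"
  shows "{R'. R \<subseteq> R' \<and> R' \<subseteq> S \<and> card R' = card R + 1} = (\<lambda>p. insert p R) ` (S - R)"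
proof (intro equalityI subsetI)
  fix R' assume "R' \<in> {R'. R \<subseteq> R' \<and> R' \<subseteq> S \<and> card R' = card R + 1}"
  then have R': "R \<subseteq> R'" "R' \<subseteq> S" "card R' = card R + 1" by auto
  have "finite R'" using R'(2) assms(1) by (rule finite_subset)
  then have "card (R' - R) = 1"
    using R' finite_subset[OF R'(1)] by (simp add: card_Diff_subset)
  then obtain p where p: "R' - R = {p}" by (auto simp: card_Suc_eq)
  then have "R' = insert p R" and "p \<in> S - R" using R' by blast+
  then show "R' \<in> (\<lambda>p. insert p R) ` (S - R)" by blast
next
  fix R' assume "R' \<in> (\<lambda>p. insert p R) ` (S - R)"
  then obtain p where "p \<in> S" "p \<notin> R" "R' = insert p R" by blast
  moreover have "finite R" using assms finite_subset by blast
  ultimately show "R' \<in> {R'. R \<subseteq> R' \<and> R' \<subseteq> S \<and> card R' = card R + 1}"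
    using assms(2) by auto
qed

lemma card_one_point_extensions_within:
  assumes "finite S" and "R \<subseteq> S"
  shows "card {R'. R \<subseteq> R' \<and> R' \<subseteq> S \<and> card R' = card R + 1} = card S - card R"
proof -
  have "inj_on (\<lambda>p. insert p R) (S - R)" by (rule inj_onI) blast
  then show ?thesis
    unfolding one_point_extensions_within[OF assms]
    using assms by (simp add: card_image card_Diff_subset finite_subset)
qed

lemma sum_extension_monomials_at_rook_matrix:
  assumes S: "rook_placement n m S"
  shows "(\<Sum>R'\<in>{R'. rook_placement n m R' \<and> R \<subseteq> R' \<and> card R' = card R + 1}.
            rook_monomial R' (rook_matrix S))
         = (if R \<subseteq> S then of_nat (card S - card R) else 0)"
proof -
  let ?T = "{R'. rook_placement n m R' \<and> R \<subseteq> R' \<and> card R' = card R + 1}"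
  have "(\<Sum>R'\<in>?T. rook_monomial R' (rook_matrix S)) = (\<Sum>R'\<in>?T. if R' \<subseteq> S then 1 else 0)"
    by (rule sum.cong) (use rook_monomial_rook_matrix rook_placement_finite in blast)+
  also have "\<dots> = of_nat (card {R'\<in>?T. R' \<subseteq> S})"
    using finite_rook_placements[of n m "\<lambda>R'. R \<subseteq> R' \<and> card R' = card R + 1"]
    by (simp add: sum.If_cases Int_def conj_assoc)
  also have "{R'\<in>?T. R' \<subseteq> S} = {R'. R \<subseteq> R' \<and> R' \<subseteq> S \<and> card R' = card R + 1}"
    using rook_placement_subset[OF S] by blast
  also have "card \<dots> = (if R \<subseteq> S then card S - card R else 0)"
  proof (cases "R \<subseteq> S")
    case False
    then have "{R'. R \<subseteq> R' \<and> R' \<subseteq> S \<and> card R' = card R + 1} = {}" by blast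
    with False show ?thesis by (simp only: card.empty if_False)
  qed (use card_one_point_extensions_within[OF rook_placement_finite[OF S]] in simp)
  finally show ?thesis by simp
qed

theorem mainTheorem9:
  fixes n m d r :: nat and R :: "(nat \<times> nat) set"
  assumes "d < r" and "r \<le> min m n" and "R \<in> Z n m d"
  shows "(\<lambda>X. rook_monomial R X
            - (1 / of_nat (r - d)) *
              (\<Sum>R'\<in>{R'. rook_placement n m R' \<and> R \<subseteq> R' \<and> card R' = d + 1}.
                 rook_monomial R' X))
         \<in> vanishing_ideal (rook_matrix ` Z n m r)"
  unfolding vanishing_ideal_def
proof clarify
  fix S assume "S \<in> Z n m r"
  then have S: "rook_placement n m S" and "card S = r" by (auto simp: Z_def)
  from assms(3) have "finite R" and "card R = d"
    by (auto simp: Z_def rook_placement_finite)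
  moreover have "of_nat (r - d) \<noteq> (0::complex)" using assms(1) by simp
  ultimately show "rook_monomial R (rook_matrix S) - 1 / of_nat (r - d) *
      (\<Sum>R'\<in>{R'. rook_placement n m R' \<and> R \<subseteq> R' \<and> card R' = d + 1}.
         rook_monomial R' (rook_matrix S)) = 0"
    using sum_extension_monomials_at_rook_matrix[OF S, of R] \<open>card S = r\<close>
    by (simp add: rook_monomial_rook_matrix)
qed

end
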